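(* Let $\theta=(\alpha,\beta,\sigma,\tau)$ with $\alpha,\beta\in\mathbb{R}$, $\sigma>0$, $\tau=\gamma\sigma$ for some $\gamma>0$. Let $F$ be a probability measure on $\mathbb{R}$, let $A_0,A_1,\dots,A_N$ be a measurable partition of $\mathbb{R}$, and let $F_N=\sum_{j=1}^N w_j\delta_{z_j}$ be a probability measure with $z_j\in A_j$ for $j=1,\dots,N$. Then \[ \|p_{\theta,F}-p_{\theta,F_N}\|_1\le 2\max_{1\le j\le N}\frac{\left(1+\frac{|\beta|}{\gamma}\right)\operatorname{diam}A_j}{\sigma}+\sum_{j=1}^N|F(A_j)-w_j|+F(A_0). \]
   Context: Errors-in-variables model: for $\theta=(\alpha,\beta,\sigma,\tau)$ and a probability measure $F$ on $\mathbb{R}$, $p_{\theta,F}(x,y)=\int\phi_\sigma(x-z)\,\phi_\tau(y-\alpha-\beta z)\,dF(z)$, where $\phi_s$ is the $N(0,s^2)$ density. $\|\cdot\|_1$ is the $L^1$ norm with respect to Lebesgue measure on $\mathbb{R}^2$. *)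

theory Defs
  imports "HOL-Probability.Probability"
begin

definition phi :: "real \<Rightarrow> real \<Rightarrow> real" where
  "phi s x = normal_density 0 s x"

definition eiv_density ::
  "real \<Rightarrow> real \<Rightarrow> real \<Rightarrow> real \<Rightarrow> real measure \<Rightarrow> real \<times> real \<Rightarrow> real" where
  "eiv_density \<alpha> \<beta> \<sigma> \<tau> F = (\<lambda>(x, y). \<integral>z. phi \<sigma> (x - z) * phi \<tau> (y - \<alpha> - \<beta> * z) \<partial>F)"

definition discrete_mix :: "nat \<Rightarrow> (nat \<Rightarrow> real) \<Rightarrow> (nat \<Rightarrow> real) \<Rightarrow> real measure" where
  "discrete_mix N w z = measure_of UNIV (sets borel)
     (\<lambda>B. \<Sum>j\<in>{1..N}. ennreal (w j) * indicator B (z j))"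

definition diam :: "real set \<Rightarrow> ennreal" where
  "diam A = (SUP p\<in>A \<times> A. ennreal \<bar>fst p - snd p\<bar>)"

end

theory Submission
  imports Defs
begin

(*
  Both densities are mixtures of the kernel k_z(x,y) = phi_sigma(x - z) phi_tau(y - alpha - beta z),
  which is a probability density on the plane for every z.  Splitting F along the partition,
    p_F - p_{F_N} = int_{A_0} k_z dF(z)
                    + sum_j [ int_{A_j} (k_z - k_{z_j}) dF(z) + (F(A_j) - w_j) k_{z_j} ],
  and Tonelli bounds the L1 norm of this by
    F(A_0) + sum_j sup_{z in A_j} |k_z - k_{z_j}|_1 F(A_j) + sum_j |F(A_j) - w_j|.
  The fundamental theorem of calculus in the shift parameter gives
  |phi_s(. - a) - phi_s(. - b)|_1 <= E|U| / s^2 |a - b| = sqrt(2/pi) |a - b| / s for U ~ N(0, s^2),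
  so z |-> k_z is Lipschitz in L1 with constant 1/sigma + |beta|/tau = (1 + |beta|/gamma)/sigma,
  and the middle sum is at most the maximum of (1 + |beta|/gamma) diam(A_j) / sigma.
*)

section \<open>Translates of the normal density\<close>

lemma has_real_derivative_normal_density_shift:
  fixes s x t :: real
  assumes "s > 0"
  shows "((\<lambda>t. normal_density 0 s (x - t)) has_real_derivative
          (x - t) / s\<^sup>2 * normal_density 0 s (x - t)) (at t within S)"
proof -
  have "((\<lambda>t. exp (- ((x - t)\<^sup>2) / (2 * s\<^sup>2))) has_real_derivative
      exp (- ((x - t)\<^sup>2) / (2 * s\<^sup>2)) * ((x - t) / s\<^sup>2)) (at t within S)"
    using assms by (auto intro!: derivative_eq_intros simp: field_simps power2_eq_square)
  from DERIV_cmult[OF this, of "1 / sqrt (2 * pi * s\<^sup>2)"] show ?thesis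
    unfolding normal_density_def by (simp add: mult_ac)
qed

lemma nn_integral_abs_mult_normal_density:
  fixes s :: real
  assumes "s > 0"
  shows "(\<integral>\<^sup>+u. ennreal (\<bar>u\<bar> / s\<^sup>2 * normal_density 0 s u) \<partial>lborel) = ennreal (sqrt (2 / pi) / s)"
proof -
  have "has_bochner_integral lborel (\<lambda>u. normal_density 0 s u * \<bar>u - 0\<bar> ^ (2 * 0 + 1))
      (2 ^ 0 * s ^ (2 * 0 + 1) * fact 0 * sqrt (2 / pi))"
    using normal_moment_abs_odd assms by blast
  from has_bochner_integral_mult_right[of "1 / s\<^sup>2", OF this]
  have "has_bochner_integral lborel (\<lambda>u. \<bar>u\<bar> / s\<^sup>2 * normal_density 0 s u) (sqrt (2 / pi) / s)"
    using assms by (simp add: power2_eq_square mult_ac)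
  then show ?thesis
    by (simp add: nn_integral_eq_integral has_bochner_integral_iff)
qed

lemma abs_normal_density_shift_diff_le:
  fixes s a b x :: real
  assumes s: "s > 0" and "a \<le> b"
  shows "ennreal \<bar>normal_density 0 s (x - a) - normal_density 0 s (x - b)\<bar>
      \<le> (\<integral>\<^sup>+t. indicator {a..b} t * ennreal (\<bar>x - t\<bar> / s\<^sup>2 * normal_density 0 s (x - t)) \<partial>lborel)"
proof -
  define g where "g t = (x - t) / s\<^sup>2 * normal_density 0 s (x - t)" for t
  have g_cont: "continuous_on {a..b} g"
    unfolding g_def normal_density_def using s by (intro continuous_intros) auto
  have "(\<integral>t. indicator {a..b} t *\<^sub>R g t \<partial>lborel) = normal_density 0 s (x - b) - normal_density 0 s (x - a)"
    by (rule integral_FTC_atLeastAtMost[OF \<open>a \<le> b\<close> _ g_cont])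
       (use has_real_derivative_normal_density_shift[OF s]
         in \<open>auto simp: g_def has_real_derivative_iff_has_vector_derivative[symmetric]\<close>)
  then have "ennreal \<bar>normal_density 0 s (x - a) - normal_density 0 s (x - b)\<bar>
      = ennreal (norm (\<integral>t. indicator {a..b} t *\<^sub>R g t \<partial>lborel))"
    by simp
  also have "\<dots> \<le> (\<integral>\<^sup>+t. norm (indicator {a..b} t *\<^sub>R g t) \<partial>lborel)"
    using borel_integrable_atLeastAtMost'[OF g_cont]
    by (intro integral_norm_bound_ennreal) (simp add: set_integrable_def)
  also have "\<dots> = (\<integral>\<^sup>+t. indicator {a..b} t * ennreal (\<bar>x - t\<bar> / s\<^sup>2 * normal_density 0 s (x - t)) \<partial>lborel)"
    by (intro nn_integral_cong) (auto simp: indicator_def g_def abs_mult)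
  finally show ?thesis .
qed

lemma nn_integral_abs_normal_density_shift_diff_le:
  fixes s a b :: real
  assumes s: "s > 0"
  shows "(\<integral>\<^sup>+x. ennreal \<bar>normal_density 0 s (x - a) - normal_density 0 s (x - b)\<bar> \<partial>lborel)
         \<le> ennreal (sqrt (2 / pi) * \<bar>a - b\<bar> / s)"
proof (induction a b rule: linorder_wlog)
  case (le a b)
  define h where "h u = ennreal (\<bar>u\<bar> / s\<^sup>2 * normal_density 0 s u)" for u
  have h_meas[measurable]: "h \<in> borel_measurable borel"
    unfolding h_def by measurable
  have "(\<integral>\<^sup>+x. ennreal \<bar>normal_density 0 s (x - a) - normal_density 0 s (x - b)\<bar> \<partial>lborel)
      \<le> (\<integral>\<^sup>+x. \<integral>\<^sup>+t. indicator {a..b} t * h (x - t) \<partial>lborel \<partial>lborel)"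
    unfolding h_def by (intro nn_integral_mono abs_normal_density_shift_diff_le s le)
  also have "\<dots> = (\<integral>\<^sup>+t. \<integral>\<^sup>+x. indicator {a..b} t * h (x - t) \<partial>lborel \<partial>lborel)"
    by (rule lborel_pair.Fubini'[symmetric]) measurable
  also have "\<dots> = (\<integral>\<^sup>+t. indicator {a..b} t * ennreal (sqrt (2 / pi) / s) \<partial>lborel)"
  proof (intro nn_integral_cong)
    fix t :: real
    have "(\<integral>\<^sup>+x. h (x - t) \<partial>lborel) = (\<integral>\<^sup>+u. h u \<partial>lborel)"
      using nn_integral_real_affine[of "\<lambda>x. h (x - t)" 1 t] by simp
    also have "\<dots> = ennreal (sqrt (2 / pi) / s)"
      unfolding h_def by (rule nn_integral_abs_mult_normal_density[OF s])
    finally show "(\<integral>\<^sup>+x. indicator {a..b} t * h (x - t) \<partial>lborel) = indicator {a..b} t * ennreal (sqrt (2 / pi) / s)"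
      by (subst nn_integral_cmult) auto
  qed
  also have "\<dots> = ennreal (sqrt (2 / pi) * \<bar>a - b\<bar> / s)"
    using le s nn_integral_cmult_indicator[of "{a..b}" lborel "ennreal (sqrt (2 / pi) / s)"]
    by (simp add: mult.commute ennreal_mult''[symmetric])
  finally show ?case .
qed (simp add: abs_minus_commute)

lemma nn_integral_normal_density_shift:
  fixes s c :: real
  assumes "s > 0"
  shows "(\<integral>\<^sup>+x. ennreal (normal_density 0 s (x - c)) \<partial>lborel) = 1"
proof -
  have "normal_density 0 s (x - c) = normal_density c s x" for x
    by (simp add: normal_density_def)
  then show ?thesis
    using assms by (simp add: nn_integral_eq_integral)
qed

section \<open>Products and mixtures of densities\<close>

lemma nn_integral_pair_measure_tensor:
  fixes f :: "'a \<Rightarrow> ennreal" and g :: "'b \<Rightarrow> ennreal"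
  assumes "sigma_finite_measure M2"
    and [measurable]: "f \<in> borel_measurable M1" "g \<in> borel_measurable M2"
  shows "(\<integral>\<^sup>+p. f (fst p) * g (snd p) \<partial>(M1 \<Otimes>\<^sub>M M2)) = (\<integral>\<^sup>+x. f x \<partial>M1) * (\<integral>\<^sup>+y. g y \<partial>M2)"
proof -
  have "(\<integral>\<^sup>+p. f (fst p) * g (snd p) \<partial>(M1 \<Otimes>\<^sub>M M2)) = (\<integral>\<^sup>+x. \<integral>\<^sup>+y. f x * g y \<partial>M2 \<partial>M1)"
    by (subst sigma_finite_measure.nn_integral_fst[OF assms(1), symmetric]) auto
  also have "\<dots> = (\<integral>\<^sup>+x. f x * (\<integral>\<^sup>+y. g y \<partial>M2) \<partial>M1)"
    by (intro nn_integral_cong nn_integral_cmult) auto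
  also have "\<dots> = (\<integral>\<^sup>+x. f x \<partial>M1) * (\<integral>\<^sup>+y. g y \<partial>M2)"
    by (rule nn_integral_multc) auto
  finally show ?thesis .
qed

lemma nn_integral_abs_diff_tensor_le:
  fixes f1 f2 :: "'a \<Rightarrow> real" and g1 g2 :: "'b \<Rightarrow> real"
  assumes "sigma_finite_measure M2"
    and [measurable]: "f1 \<in> borel_measurable M1" "f2 \<in> borel_measurable M1"
      "g1 \<in> borel_measurable M2" "g2 \<in> borel_measurable M2"
    and f2_nonneg: "\<And>x. 0 \<le> f2 x" and g1_nonneg: "\<And>y. 0 \<le> g1 y"
  shows "(\<integral>\<^sup>+p. ennreal \<bar>f1 (fst p) * g1 (snd p) - f2 (fst p) * g2 (snd p)\<bar> \<partial>(M1 \<Otimes>\<^sub>M M2))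
    \<le> (\<integral>\<^sup>+x. ennreal \<bar>f1 x - f2 x\<bar> \<partial>M1) * (\<integral>\<^sup>+y. ennreal (g1 y) \<partial>M2)
      + (\<integral>\<^sup>+x. ennreal (f2 x) \<partial>M1) * (\<integral>\<^sup>+y. ennreal \<bar>g1 y - g2 y\<bar> \<partial>M2)"
proof -
  have "ennreal \<bar>f1 x * g1 y - f2 x * g2 y\<bar>
      \<le> ennreal \<bar>f1 x - f2 x\<bar> * ennreal (g1 y) + ennreal (f2 x) * ennreal \<bar>g1 y - g2 y\<bar>" for x y
  proof -
    have "\<bar>f1 x * g1 y - f2 x * g2 y\<bar> = \<bar>(f1 x - f2 x) * g1 y + f2 x * (g1 y - g2 y)\<bar>"
      by (simp add: algebra_simps)
    also have "\<dots> \<le> \<bar>f1 x - f2 x\<bar> * g1 y + f2 x * \<bar>g1 y - g2 y\<bar>"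
      using f2_nonneg[of x] g1_nonneg[of y] by (metis abs_mult abs_of_nonneg abs_triangle_ineq)
    finally show ?thesis
      using f2_nonneg[of x] g1_nonneg[of y]
      by (simp add: ennreal_mult'[symmetric] ennreal_plus[symmetric] del: ennreal_plus)
  qed
  then have "(\<integral>\<^sup>+p. ennreal \<bar>f1 (fst p) * g1 (snd p) - f2 (fst p) * g2 (snd p)\<bar> \<partial>(M1 \<Otimes>\<^sub>M M2))
    \<le> (\<integral>\<^sup>+p. ennreal \<bar>f1 (fst p) - f2 (fst p)\<bar> * ennreal (g1 (snd p))
        + ennreal (f2 (fst p)) * ennreal \<bar>g1 (snd p) - g2 (snd p)\<bar> \<partial>(M1 \<Otimes>\<^sub>M M2))"
    by (intro nn_integral_mono)
  also have "\<dots> = (\<integral>\<^sup>+p. ennreal \<bar>f1 (fst p) - f2 (fst p)\<bar> * ennreal (g1 (snd p)) \<partial>(M1 \<Otimes>\<^sub>M M2))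
      + (\<integral>\<^sup>+p. ennreal (f2 (fst p)) * ennreal \<bar>g1 (snd p) - g2 (snd p)\<bar> \<partial>(M1 \<Otimes>\<^sub>M M2))"
    by (rule nn_integral_add) measurable
  also have "\<dots> = (\<integral>\<^sup>+x. ennreal \<bar>f1 x - f2 x\<bar> \<partial>M1) * (\<integral>\<^sup>+y. ennreal (g1 y) \<partial>M2)
      + (\<integral>\<^sup>+x. ennreal (f2 x) \<partial>M1) * (\<integral>\<^sup>+y. ennreal \<bar>g1 y - g2 y\<bar> \<partial>M2)"
    by (intro arg_cong2[where f="(+)"] nn_integral_pair_measure_tensor[OF assms(1)]) measurable
  finally show ?thesis .
qed

lemma integral_eq_sum_partition:
  fixes g :: "'a \<Rightarrow> real"
  assumes "integrable F g" and "finite I"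
    and A: "\<And>j. j \<in> I \<Longrightarrow> A j \<in> sets F" "disjoint_family_on A I" "space F \<subseteq> (\<Union>j\<in>I. A j)"
  shows "(\<integral>x. g x \<partial>F) = (\<Sum>j\<in>I. \<integral>x. indicator (A j) x * g x \<partial>F)"
proof -
  have "(\<Sum>j\<in>I. indicator (A j) x) = (1::real)" if "x \<in> space F" for x
  proof -
    obtain i where i: "i \<in> I" "x \<in> A i" using A(3) \<open>x \<in> space F\<close> by blast
    have "x \<notin> A j" if "j \<in> I" "j \<noteq> i" for j
      using A(2) i that unfolding disjoint_family_on_def by blast
    then have "(\<Sum>j\<in>I. indicator (A j) x) = (\<Sum>j\<in>I. if j = i then 1 else (0::real))"
      using i by (intro sum.cong) (auto simp: indicator_def)
    then show ?thesis using i \<open>finite I\<close> by simp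
  qed
  then have "(\<integral>x. g x \<partial>F) = (\<integral>x. (\<Sum>j\<in>I. indicator (A j) x * g x) \<partial>F)"
    by (intro Bochner_Integration.integral_cong) (simp_all flip: sum_distrib_right)
  also have "\<dots> = (\<Sum>j\<in>I. \<integral>x. indicator (A j) x * g x \<partial>F)"
    using A(1) integrable_mult_indicator[OF _ \<open>integrable F g\<close>]
    by (intro Bochner_Integration.integral_sum) auto
  finally show ?thesis .
qed

lemma integral_diff_quadrature_eq:
  fixes g :: "'a \<Rightarrow> real" and N :: nat
  assumes F: "finite_measure F" and g: "integrable F g"
    and A: "\<And>j. j \<le> N \<Longrightarrow> A j \<in> sets F" "disjoint_family_on A {0..N}" "space F \<subseteq> (\<Union>j\<in>{0..N}. A j)"
  shows "(\<integral>x. g x \<partial>F) - (\<Sum>j\<in>{1..N}. w j * g (z j))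
    = (\<integral>x. indicator (A 0) x * g x \<partial>F)
      + (\<Sum>j\<in>{1..N}. (\<integral>x. indicator (A j) x * (g x - g (z j)) \<partial>F) + (measure F (A j) - w j) * g (z j))"
proof -
  have cell: "(\<integral>x. indicator (A j) x * g x \<partial>F)
      = (\<integral>x. indicator (A j) x * (g x - g (z j)) \<partial>F) + measure F (A j) * g (z j)" if "j \<le> N" for j
  proof -
    have "(\<integral>x. indicator (A j) x * g x \<partial>F)
        = (\<integral>x. indicator (A j) x * (g x - g (z j)) + indicator (A j) x * g (z j) \<partial>F)"
      by (simp add: algebra_simps)
    also have "\<dots> = (\<integral>x. indicator (A j) x * (g x - g (z j)) \<partial>F) + (\<integral>x. indicator (A j) x * g (z j) \<partial>F)"
      using integrable_mult_indicator[OF A(1)[OF that] Bochner_Integration.integrable_diff[OF g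
          finite_measure.integrable_const[OF F]]] A(1)[OF that] finite_measure.emeasure_finite[OF F]
      by (intro Bochner_Integration.integral_add) (auto simp: less_top)
    also have "(\<integral>x. indicator (A j) x * g (z j) \<partial>F) = measure F (A j) * g (z j)"
      using A(1)[OF that] finite_measure.emeasure_finite[OF F] by simp
    finally show ?thesis .
  qed
  have "(\<integral>x. g x \<partial>F) = (\<Sum>j\<in>{0..N}. \<integral>x. indicator (A j) x * g x \<partial>F)"
    using A by (intro integral_eq_sum_partition[OF g]) auto
  also have "\<dots> = (\<integral>x. indicator (A 0) x * g x \<partial>F) + (\<Sum>j\<in>{1..N}. \<integral>x. indicator (A j) x * g x \<partial>F)"
    by (simp add: sum.atLeast_Suc_atMost)
  also have "\<dots> = (\<integral>x. indicator (A 0) x * g x \<partial>F)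
      + (\<Sum>j\<in>{1..N}. (\<integral>x. indicator (A j) x * (g x - g (z j)) \<partial>F) + measure F (A j) * g (z j))"
    using cell by (intro arg_cong2[where f="(+)"] refl sum.cong) auto
  moreover have "(\<Sum>j\<in>{1..N}. (\<integral>x. indicator (A j) x * (g x - g (z j)) \<partial>F) + (measure F (A j) - w j) * g (z j))
      = (\<Sum>j\<in>{1..N}. (\<integral>x. indicator (A j) x * (g x - g (z j)) \<partial>F) + measure F (A j) * g (z j))
        - (\<Sum>j\<in>{1..N}. w j * g (z j))"
    by (simp add: left_diff_distrib sum.distrib sum_subtractf)
  ultimately show ?thesis
    by linarith
qed

lemma abs_integral_diff_quadrature_le:
  fixes g :: "'a \<Rightarrow> real" and N :: nat
  assumes F: "finite_measure F" and g: "integrable F g"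
    and A: "\<And>j. j \<le> N \<Longrightarrow> A j \<in> sets F" "disjoint_family_on A {0..N}" "space F \<subseteq> (\<Union>j\<in>{0..N}. A j)"
  shows "ennreal \<bar>(\<integral>x. g x \<partial>F) - (\<Sum>j\<in>{1..N}. w j * g (z j))\<bar>
    \<le> (\<integral>\<^sup>+x. indicator (A 0) x * ennreal \<bar>g x\<bar> \<partial>F)
      + (\<Sum>j\<in>{1..N}. (\<integral>\<^sup>+x. indicator (A j) x * ennreal \<bar>g x - g (z j)\<bar> \<partial>F)
                      + ennreal \<bar>measure F (A j) - w j\<bar> * ennreal \<bar>g (z j)\<bar>)"
proof -
  define I where "I = (\<integral>x. indicator (A 0) x * g x \<partial>F)"
  define J where "J j = (\<integral>x. indicator (A j) x * (g x - g (z j)) \<partial>F)" for j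
  have decomposition: "(\<integral>x. g x \<partial>F) - (\<Sum>j\<in>{1..N}. w j * g (z j))
      = I + (\<Sum>j\<in>{1..N}. J j + (measure F (A j) - w j) * g (z j))"
    unfolding I_def J_def by (rule integral_diff_quadrature_eq[OF F g A])
  have "\<bar>(\<integral>x. g x \<partial>F) - (\<Sum>j\<in>{1..N}. w j * g (z j))\<bar>
      \<le> \<bar>I\<bar> + (\<Sum>j\<in>{1..N}. \<bar>J j\<bar> + \<bar>measure F (A j) - w j\<bar> * \<bar>g (z j)\<bar>)"
    unfolding decomposition
    by (rule order_trans[OF abs_triangle_ineq add_left_mono], rule order_trans[OF sum_abs sum_mono])
       (simp add: abs_triangle_ineq abs_mult[symmetric])
  then have "ennreal \<bar>(\<integral>x. g x \<partial>F) - (\<Sum>j\<in>{1..N}. w j * g (z j))\<bar>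
      \<le> ennreal \<bar>I\<bar> + (\<Sum>j\<in>{1..N}. ennreal \<bar>J j\<bar> + ennreal \<bar>measure F (A j) - w j\<bar> * ennreal \<bar>g (z j)\<bar>)"
    by (auto dest!: ennreal_leI simp: sum_nonneg ennreal_mult simp flip: sum_ennreal)
  also have "\<dots> \<le> (\<integral>\<^sup>+x. indicator (A 0) x * ennreal \<bar>g x\<bar> \<partial>F)
      + (\<Sum>j\<in>{1..N}. (\<integral>\<^sup>+x. indicator (A j) x * ennreal \<bar>g x - g (z j)\<bar> \<partial>F)
                      + ennreal \<bar>measure F (A j) - w j\<bar> * ennreal \<bar>g (z j)\<bar>)"
  proof (intro add_mono sum_mono order_refl)
    show "ennreal \<bar>I\<bar> \<le> (\<integral>\<^sup>+x. indicator (A 0) x * ennreal \<bar>g x\<bar> \<partial>F)"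
      using integral_norm_bound_ennreal[OF integrable_mult_indicator[OF A(1) g, of 0]]
      by (simp add: I_def abs_mult ennreal_mult' ennreal_indicator)
    show "ennreal \<bar>J j\<bar> \<le> (\<integral>\<^sup>+x. indicator (A j) x * ennreal \<bar>g x - g (z j)\<bar> \<partial>F)" if "j \<in> {1..N}" for j
      using integral_norm_bound_ennreal[OF integrable_mult_indicator[OF A(1)
          Bochner_Integration.integrable_diff[OF g finite_measure.integrable_const[OF F]]], of j] that
      by (simp add: J_def abs_mult ennreal_mult' ennreal_indicator)
  qed
  finally show ?thesis .
qed

lemma nn_integral_indicator_swap:
  fixes f :: "'b \<Rightarrow> 'a \<Rightarrow> ennreal"
  assumes "pair_sigma_finite M F" and [measurable]: "B \<in> sets F"
    and f[measurable]: "(\<lambda>q. f (snd q) (fst q)) \<in> borel_measurable (M \<Otimes>\<^sub>M F)"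
  shows "(\<lambda>p. \<integral>\<^sup>+x. indicator B x * f x p \<partial>F) \<in> borel_measurable M"
    and "(\<integral>\<^sup>+p. \<integral>\<^sup>+x. indicator B x * f x p \<partial>F \<partial>M) = (\<integral>\<^sup>+x. indicator B x * (\<integral>\<^sup>+p. f x p \<partial>M) \<partial>F)"
proof -
  interpret pair_sigma_finite M F by fact
  have integrand: "case_prod (\<lambda>p x. indicator B x * f x p) \<in> borel_measurable (M \<Otimes>\<^sub>M F)"
    unfolding case_prod_unfold by measurable
  then show "(\<lambda>p. \<integral>\<^sup>+x. indicator B x * f x p \<partial>F) \<in> borel_measurable M"
    by (rule M2.borel_measurable_nn_integral)
  have "(\<integral>\<^sup>+p. \<integral>\<^sup>+x. indicator B x * f x p \<partial>F \<partial>M) = (\<integral>\<^sup>+x. \<integral>\<^sup>+p. indicator B x * f x p \<partial>M \<partial>F)"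
    using integrand by (rule Fubini'[symmetric])
  also have "\<dots> = (\<integral>\<^sup>+x. indicator B x * (\<integral>\<^sup>+p. f x p \<partial>M) \<partial>F)"
    using measurable_compose[OF measurable_Pair2' f]
    by (intro nn_integral_cong nn_integral_cmult) simp
  finally show "(\<integral>\<^sup>+p. \<integral>\<^sup>+x. indicator B x * f x p \<partial>F \<partial>M) = (\<integral>\<^sup>+x. indicator B x * (\<integral>\<^sup>+p. f x p \<partial>M) \<partial>F)" .
qed

lemma nn_integral_abs_mixture_diff_le:
  fixes k :: "'b \<Rightarrow> 'a \<Rightarrow> real" and N :: nat
  assumes M: "sigma_finite_measure M" and F: "finite_measure F"
    and k_meas[measurable]: "(\<lambda>q. k (snd q) (fst q)) \<in> borel_measurable (M \<Otimes>\<^sub>M F)"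
    and k_nonneg: "\<And>x p. 0 \<le> k x p"
    and k_int: "\<And>p. p \<in> space M \<Longrightarrow> integrable F (\<lambda>x. k x p)"
    and k_density: "\<And>x. x \<in> space F \<Longrightarrow> (\<integral>\<^sup>+p. ennreal (k x p) \<partial>M) = 1"
    and A: "\<And>j. j \<le> N \<Longrightarrow> A j \<in> sets F" "disjoint_family_on A {0..N}" "space F \<subseteq> (\<Union>j\<in>{0..N}. A j)"
    and z: "\<And>j. j \<in> {1..N} \<Longrightarrow> z j \<in> space F"
  shows "(\<integral>\<^sup>+p. ennreal \<bar>(\<integral>x. k x p \<partial>F) - (\<Sum>j\<in>{1..N}. w j * k (z j) p)\<bar> \<partial>M)
    \<le> emeasure F (A 0)
      + (\<Sum>j\<in>{1..N}. (\<integral>\<^sup>+x. indicator (A j) x * (\<integral>\<^sup>+p. ennreal \<bar>k x p - k (z j) p\<bar> \<partial>M) \<partial>F)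
                      + ennreal \<bar>measure F (A j) - w j\<bar>)"
proof -
  have MF: "pair_sigma_finite M F"
    using M F by (simp add: pair_sigma_finite_def finite_measure.axioms(1))
  define a where "a = (\<lambda>p. \<integral>\<^sup>+x. indicator (A 0) x * ennreal (k x p) \<partial>F)"
  define b where "b j = (\<lambda>p. \<integral>\<^sup>+x. indicator (A j) x * ennreal \<bar>k x p - k (z j) p\<bar> \<partial>F)" for j
  define c where "c j = (\<lambda>p. ennreal \<bar>measure F (A j) - w j\<bar> * ennreal (k (z j) p))" for j
  have k_section: "(\<lambda>p. k (z j) p) \<in> borel_measurable M" if "j \<in> {1..N}" for j
    using measurable_compose[OF measurable_Pair2'[OF z[OF that]] k_meas] by simp
  have a: "a \<in> borel_measurable M" "(\<integral>\<^sup>+p. a p \<partial>M) = emeasure F (A 0)"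
    using nn_integral_indicator_swap[OF MF, of "A 0" "\<lambda>x p. ennreal (k x p)"] A(1)[of 0]
    by (simp_all add: a_def k_nonneg k_density cong: nn_integral_cong)
  have b: "b j \<in> borel_measurable M"
    "(\<integral>\<^sup>+p. b j p \<partial>M) = (\<integral>\<^sup>+x. indicator (A j) x * (\<integral>\<^sup>+p. ennreal \<bar>k x p - k (z j) p\<bar> \<partial>M) \<partial>F)"
    if "j \<in> {1..N}" for j
    using nn_integral_indicator_swap[OF MF, of "A j" "\<lambda>x p. ennreal \<bar>k x p - k (z j) p\<bar>"]
      A(1)[of j] that k_section[OF that]
    by (simp_all add: b_def measurable_compose[OF measurable_fst k_section[OF that]])
  have c: "c j \<in> borel_measurable M" "(\<integral>\<^sup>+p. c j p \<partial>M) = ennreal \<bar>measure F (A j) - w j\<bar>"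
    if "j \<in> {1..N}" for j
    using k_section[OF that] z[OF that] by (simp_all add: c_def nn_integral_cmult k_density)
  have "(\<integral>\<^sup>+p. ennreal \<bar>(\<integral>x. k x p \<partial>F) - (\<Sum>j\<in>{1..N}. w j * k (z j) p)\<bar> \<partial>M)
      \<le> (\<integral>\<^sup>+p. a p + (\<Sum>j\<in>{1..N}. b j p + c j p) \<partial>M)"
    unfolding a_def b_def c_def using abs_integral_diff_quadrature_le[OF F k_int A]
    by (intro nn_integral_mono) (simp add: k_nonneg)
  also have "\<dots> = (\<integral>\<^sup>+p. a p \<partial>M) + (\<Sum>j\<in>{1..N}. (\<integral>\<^sup>+p. b j p \<partial>M) + (\<integral>\<^sup>+p. c j p \<partial>M))"
  proof -
    have bc: "(\<lambda>p. b j p + c j p) \<in> borel_measurable M" if "j \<in> {1..N}" for j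
      using b(1)[OF that] c(1)[OF that] by (rule borel_measurable_add)
    then have "(\<integral>\<^sup>+p. a p + (\<Sum>j\<in>{1..N}. b j p + c j p) \<partial>M)
        = (\<integral>\<^sup>+p. a p \<partial>M) + (\<Sum>j\<in>{1..N}. \<integral>\<^sup>+p. b j p + c j p \<partial>M)"
      by (subst nn_integral_add[OF a(1) borel_measurable_sum], assumption)
         (subst nn_integral_sum[OF bc], assumption, rule refl)
    also have "\<dots> = (\<integral>\<^sup>+p. a p \<partial>M) + (\<Sum>j\<in>{1..N}. (\<integral>\<^sup>+p. b j p \<partial>M) + (\<integral>\<^sup>+p. c j p \<partial>M))"
      by (intro arg_cong2[where f="(+)"] refl sum.cong nn_integral_add b(1) c(1))
    finally show ?thesis .
  qed
  also have "\<dots> = emeasure F (A 0)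
      + (\<Sum>j\<in>{1..N}. (\<integral>\<^sup>+x. indicator (A j) x * (\<integral>\<^sup>+p. ennreal \<bar>k x p - k (z j) p\<bar> \<partial>M) \<partial>F)
                      + ennreal \<bar>measure F (A j) - w j\<bar>)"
    unfolding a(2) by (intro arg_cong2[where f="(+)"] refl sum.cong b(2) c(2))
  finally show ?thesis .
qed

lemma abs_diff_le_diam: "x \<in> A \<Longrightarrow> y \<in> A \<Longrightarrow> ennreal \<bar>x - y\<bar> \<le> diam A"
  unfolding diam_def by (rule SUP_upper2[where i="(x, y)"]) auto

lemma nn_integral_indicator_le_diam:
  fixes d :: "real \<Rightarrow> ennreal"
  assumes "A \<in> sets F" "z0 \<in> A" "L \<ge> 0"
    and "\<And>x. x \<in> A \<Longrightarrow> d x \<le> ennreal (L * \<bar>x - z0\<bar>)"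
  shows "(\<integral>\<^sup>+x. indicator A x * d x \<partial>F) \<le> ennreal L * diam A * emeasure F A"
proof -
  have "indicator A x * d x \<le> ennreal L * diam A * indicator A x" for x
  proof (cases "x \<in> A")
    case True
    have "d x \<le> ennreal L * ennreal \<bar>x - z0\<bar>"
      using assms(4)[OF True] assms(3) by (simp add: ennreal_mult)
    also have "\<dots> \<le> ennreal L * diam A"
      by (intro mult_left_mono abs_diff_le_diam True assms(2)) simp
    finally show ?thesis using True by simp
  qed simp
  then have "(\<integral>\<^sup>+x. indicator A x * d x \<partial>F) \<le> (\<integral>\<^sup>+x. ennreal L * diam A * indicator A x \<partial>F)"
    by (intro nn_integral_mono)
  also have "\<dots> = ennreal L * diam A * emeasure F A"
    using assms(1) by (rule nn_integral_cmult_indicator)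
  finally show ?thesis .
qed

lemma sum_mult_emeasure_le_Max:
  fixes c :: "'i \<Rightarrow> ennreal"
  assumes "prob_space F" "finite I" "I \<noteq> {}"
    and "\<And>j. j \<in> I \<Longrightarrow> A j \<in> sets F" "disjoint_family_on A I"
  shows "(\<Sum>j\<in>I. c j * emeasure F (A j)) \<le> (MAX j\<in>I. c j)"
proof -
  have "(\<Sum>j\<in>I. c j * emeasure F (A j)) \<le> (\<Sum>j\<in>I. (MAX j\<in>I. c j) * emeasure F (A j))"
    using assms(2) by (intro sum_mono mult_right_mono) auto
  also have "\<dots> = (MAX j\<in>I. c j) * emeasure F (\<Union>j\<in>I. A j)"
    using assms by (simp add: sum_emeasure image_subset_iff flip: sum_distrib_left)
  also have "\<dots> \<le> (MAX j\<in>I. c j)"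
    using prob_space.emeasure_le_1[OF assms(1)] by (intro mult_left_le) simp_all
  finally show ?thesis .
qed

lemma discrete_mix_eq_distr:
  assumes "\<And>j. j \<in> {1..N} \<Longrightarrow> w j \<ge> 0"
  shows "discrete_mix N w z = distr (density (count_space {1..N}) (\<lambda>j. ennreal (w j))) borel z"
proof -
  let ?M = "distr (density (count_space {1..N}) (\<lambda>j. ennreal (w j))) borel z"
  have "?M = measure_of UNIV (sets borel) (emeasure ?M)"
    using measure_of_of_measure[of ?M] by simp
  also have "\<dots> = discrete_mix N w z"
    unfolding discrete_mix_def
  proof (rule measure_of_eq)
    fix B :: "real set"
    assume "B \<in> sigma_sets UNIV (sets borel)"
    then have "B \<in> sets borel"
      using sets.sigma_sets_eq[of borel, unfolded space_borel] by blast
    then have "emeasure ?M B = (\<Sum>j\<in>{1..N}. ennreal (w j) * indicator (z -` B \<inter> {1..N}) j)"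
      by (simp add: emeasure_distr emeasure_density nn_integral_count_space_finite)
    also have "\<dots> = (\<Sum>j\<in>{1..N}. ennreal (w j) * indicator B (z j))"
      by (intro sum.cong refl) (auto simp: indicator_def)
    finally show "emeasure ?M B = (\<Sum>j\<in>{1..N}. ennreal (w j) * indicator B (z j))" .
  qed simp
  finally show ?thesis by simp
qed

lemma integral_discrete_mix:
  fixes f :: "real \<Rightarrow> real"
  assumes w: "\<And>j. j \<in> {1..N} \<Longrightarrow> w j \<ge> 0" and f: "f \<in> borel_measurable borel"
  shows "(\<integral>x. f x \<partial>discrete_mix N w z) = (\<Sum>j\<in>{1..N}. w j * f (z j))"
proof -
  have "discrete_mix N w z = distr (density (count_space {1..N}) (\<lambda>j. ennreal (w j))) borel z"
    using w by (rule discrete_mix_eq_distr)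
  then have "(\<integral>x. f x \<partial>discrete_mix N w z) = (\<integral>j. f (z j) \<partial>density (count_space {1..N}) (\<lambda>j. ennreal (w j)))"
    using f by (simp add: integral_distr)
  also have "\<dots> = (\<integral>j. w j *\<^sub>R f (z j) \<partial>count_space {1..N})"
    using w by (intro integral_density) (auto simp: AE_count_space)
  also have "\<dots> = (\<Sum>j\<in>{1..N}. w j * f (z j))"
    by (simp add: lebesgue_integral_count_space_finite)
  finally show ?thesis .
qed

section \<open>The errors-in-variables kernel\<close>

definition eiv_kernel :: "real \<Rightarrow> real \<Rightarrow> real \<Rightarrow> real \<Rightarrow> real \<Rightarrow> real \<times> real \<Rightarrow> real" where
  "eiv_kernel \<alpha> \<beta> \<sigma> \<tau> z = (\<lambda>(x, y). phi \<sigma> (x - z) * phi \<tau> (y - \<alpha> - \<beta> * z))"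

lemma eiv_kernel_eq:
  "eiv_kernel \<alpha> \<beta> \<sigma> \<tau> z p = normal_density 0 \<sigma> (fst p - z) * normal_density 0 \<tau> (snd p - (\<alpha> + \<beta> * z))"
  by (simp add: eiv_kernel_def phi_def case_prod_unfold diff_diff_eq)

lemma eiv_density_eq_integral_eiv_kernel:
  "eiv_density \<alpha> \<beta> \<sigma> \<tau> F p = (\<integral>z. eiv_kernel \<alpha> \<beta> \<sigma> \<tau> z p \<partial>F)"
  by (simp add: eiv_density_def eiv_kernel_def case_prod_unfold)

lemma eiv_kernel_nonneg: "0 \<le> eiv_kernel \<alpha> \<beta> \<sigma> \<tau> z p"
  by (simp add: eiv_kernel_eq)

lemma eiv_kernel_le: "eiv_kernel \<alpha> \<beta> \<sigma> \<tau> z p \<le> 1 / sqrt (2 * pi * \<sigma>\<^sup>2) * (1 / sqrt (2 * pi * \<tau>\<^sup>2))"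
proof -
  have "normal_density 0 s x \<le> 1 / sqrt (2 * pi * s\<^sup>2)" for s x :: real
    unfolding normal_density_def by (intro mult_left_le) auto
  then show ?thesis
    unfolding eiv_kernel_eq by (intro mult_mono) auto
qed

lemma borel_measurable_eiv_kernel:
  "(\<lambda>z. eiv_kernel \<alpha> \<beta> \<sigma> \<tau> z p) \<in> borel_measurable borel"
  unfolding eiv_kernel_eq by measurable

lemma borel_measurable_eiv_kernel_pair:
  assumes "sets M = sets (borel :: (real \<times> real) measure)" and "sets N = sets (borel :: real measure)"
  shows "(\<lambda>q. eiv_kernel \<alpha> \<beta> \<sigma> \<tau> (snd q) (fst q)) \<in> borel_measurable (M \<Otimes>\<^sub>M N)"
proof -
  have "sets M = sets (borel \<Otimes>\<^sub>M borel :: (real \<times> real) measure)"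
    unfolding borel_prod by (rule assms(1))
  then have pair_sets: "sets (M \<Otimes>\<^sub>M N) = sets ((borel \<Otimes>\<^sub>M borel) \<Otimes>\<^sub>M borel)"
    using assms(2) by (rule sets_pair_measure_cong)
  show ?thesis
    unfolding measurable_cong_sets[OF pair_sets refl] eiv_kernel_eq by measurable
qed

lemma nn_integral_eiv_kernel:
  assumes "\<sigma> > 0" "\<tau> > 0"
  shows "(\<integral>\<^sup>+p. ennreal (eiv_kernel \<alpha> \<beta> \<sigma> \<tau> z p) \<partial>lborel) = 1"
  unfolding eiv_kernel_eq ennreal_mult'[OF normal_density_nonneg]
  by (subst lborel_prod[symmetric], subst nn_integral_pair_measure_tensor)
     (auto simp: nn_integral_normal_density_shift assms lborel.sigma_finite_measure_axioms)

lemma nn_integral_abs_diff_eiv_kernel_le: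
  assumes \<sigma>: "\<sigma> > 0" and \<tau>: "\<tau> > 0"
  shows "(\<integral>\<^sup>+p. ennreal \<bar>eiv_kernel \<alpha> \<beta> \<sigma> \<tau> z p - eiv_kernel \<alpha> \<beta> \<sigma> \<tau> z' p\<bar> \<partial>lborel)
     \<le> ennreal ((1 / \<sigma> + \<bar>\<beta>\<bar> / \<tau>) * \<bar>z - z'\<bar>)"
proof -
  have "(\<integral>\<^sup>+p. ennreal \<bar>eiv_kernel \<alpha> \<beta> \<sigma> \<tau> z p - eiv_kernel \<alpha> \<beta> \<sigma> \<tau> z' p\<bar> \<partial>lborel)
     \<le> (\<integral>\<^sup>+x. ennreal \<bar>normal_density 0 \<sigma> (x - z) - normal_density 0 \<sigma> (x - z')\<bar> \<partial>lborel)
       + (\<integral>\<^sup>+y. ennreal \<bar>normal_density 0 \<tau> (y - (\<alpha> + \<beta> * z)) - normal_density 0 \<tau> (y - (\<alpha> + \<beta> * z'))\<bar> \<partial>lborel)"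
    using nn_integral_abs_diff_tensor_le[of lborel
        "\<lambda>x. normal_density 0 \<sigma> (x - z)" lborel "\<lambda>x. normal_density 0 \<sigma> (x - z')"
        "\<lambda>y. normal_density 0 \<tau> (y - (\<alpha> + \<beta> * z))" "\<lambda>y. normal_density 0 \<tau> (y - (\<alpha> + \<beta> * z'))"]
    by (simp add: eiv_kernel_eq lborel_prod nn_integral_normal_density_shift \<sigma> \<tau> lborel.sigma_finite_measure_axioms)
  also have "\<dots> \<le> ennreal (sqrt (2 / pi) * \<bar>z - z'\<bar> / \<sigma>)
      + ennreal (sqrt (2 / pi) * \<bar>\<alpha> + \<beta> * z - (\<alpha> + \<beta> * z')\<bar> / \<tau>)"
    by (intro add_mono nn_integral_abs_normal_density_shift_diff_le \<sigma> \<tau>)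
  also have "\<dots> = ennreal (sqrt (2 / pi) * ((1 / \<sigma> + \<bar>\<beta>\<bar> / \<tau>) * \<bar>z - z'\<bar>))"
    using \<sigma> \<tau> by (simp add: ennreal_plus[symmetric] abs_mult[symmetric] field_simps del: ennreal_plus)
  also have "\<dots> \<le> ennreal ((1 / \<sigma> + \<bar>\<beta>\<bar> / \<tau>) * \<bar>z - z'\<bar>)"
    using \<sigma> \<tau> pi_gt3 by (intro ennreal_leI mult_left_le_one_le) auto
  finally show ?thesis .
qed

lemma integrable_eiv_kernel:
  assumes "finite_measure F" and "sets F = sets borel"
  shows "integrable F (\<lambda>x. eiv_kernel \<alpha> \<beta> \<sigma> \<tau> x p)"
proof (rule finite_measure.integrable_const_bound[OF assms(1)])
  show "AE x in F. norm (eiv_kernel \<alpha> \<beta> \<sigma> \<tau> x p) \<le> 1 / sqrt (2 * pi * \<sigma>\<^sup>2) * (1 / sqrt (2 * pi * \<tau>\<^sup>2))"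
    using eiv_kernel_nonneg eiv_kernel_le by simp
  show "(\<lambda>x. eiv_kernel \<alpha> \<beta> \<sigma> \<tau> x p) \<in> borel_measurable F"
    unfolding measurable_cong_sets[OF assms(2) refl] by (rule borel_measurable_eiv_kernel)
qed

lemma eiv_density_discrete_mix:
  assumes "\<And>j. j \<in> {1..N} \<Longrightarrow> w j \<ge> 0"
  shows "eiv_density \<alpha> \<beta> \<sigma> \<tau> (discrete_mix N w z) p = (\<Sum>j\<in>{1..N}. w j * eiv_kernel \<alpha> \<beta> \<sigma> \<tau> (z j) p)"
  unfolding eiv_density_eq_integral_eiv_kernel by (rule integral_discrete_mix[OF assms borel_measurable_eiv_kernel])

lemma nn_integral_abs_eiv_density_diff_le:
  fixes N :: nat
  assumes \<sigma>: "\<sigma> > 0" and \<tau>: "\<tau> > 0"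
    and F: "finite_measure F" "sets F = sets borel"
    and A: "\<And>j. j \<le> N \<Longrightarrow> A j \<in> sets borel" "disjoint_family_on A {0..N}" "(\<Union>j\<in>{0..N}. A j) = UNIV"
    and w: "\<And>j. j \<in> {1..N} \<Longrightarrow> w j \<ge> 0"
    and z: "\<And>j. j \<in> {1..N} \<Longrightarrow> z j \<in> A j"
  shows "(\<integral>\<^sup>+p. ennreal \<bar>eiv_density \<alpha> \<beta> \<sigma> \<tau> F p - eiv_density \<alpha> \<beta> \<sigma> \<tau> (discrete_mix N w z) p\<bar> \<partial>lborel)
    \<le> emeasure F (A 0)
      + (\<Sum>j\<in>{1..N}. ennreal (1 / \<sigma> + \<bar>\<beta>\<bar> / \<tau>) * diam (A j) * emeasure F (A j)
                      + ennreal \<bar>measure F (A j) - w j\<bar>)"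
proof -
  let ?k = "eiv_kernel \<alpha> \<beta> \<sigma> \<tau>"
  have space_F: "space F = UNIV"
    using sets_eq_imp_space_eq[OF F(2)] by simp
  have A_sets: "A j \<in> sets F" if "j \<le> N" for j
    using A(1) F(2) that by simp
  have discrete_mix_density: "eiv_density \<alpha> \<beta> \<sigma> \<tau> (discrete_mix N w z) p = (\<Sum>j\<in>{1..N}. w j * ?k (z j) p)" for p
    using w by (rule eiv_density_discrete_mix)
  have "(\<integral>\<^sup>+p. ennreal \<bar>eiv_density \<alpha> \<beta> \<sigma> \<tau> F p - eiv_density \<alpha> \<beta> \<sigma> \<tau> (discrete_mix N w z) p\<bar> \<partial>lborel)
      \<le> emeasure F (A 0)
        + (\<Sum>j\<in>{1..N}. (\<integral>\<^sup>+x. indicator (A j) x * (\<integral>\<^sup>+p. ennreal \<bar>?k x p - ?k (z j) p\<bar> \<partial>lborel) \<partial>F)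
                        + ennreal \<bar>measure F (A j) - w j\<bar>)"
    unfolding discrete_mix_density unfolding eiv_density_eq_integral_eiv_kernel
    using A(2,3) A_sets integrable_eiv_kernel[OF F]
    by (intro nn_integral_abs_mixture_diff_le lborel.sigma_finite_measure_axioms F(1)
        borel_measurable_eiv_kernel_pair[OF sets_lborel F(2)] eiv_kernel_nonneg nn_integral_eiv_kernel \<sigma> \<tau>)
       (auto simp: space_F)
  also have "\<dots> \<le> emeasure F (A 0)
      + (\<Sum>j\<in>{1..N}. ennreal (1 / \<sigma> + \<bar>\<beta>\<bar> / \<tau>) * diam (A j) * emeasure F (A j)
                      + ennreal \<bar>measure F (A j) - w j\<bar>)"
    using A_sets z \<sigma> \<tau> nn_integral_abs_diff_eiv_kernel_le[OF \<sigma> \<tau>]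
    by (intro add_mono order_refl sum_mono nn_integral_indicator_le_diam) auto
  finally show ?thesis .
qed

theorem mainTheorem11:
  fixes \<alpha> \<beta> \<sigma> \<tau> \<gamma> :: real
    and F :: "real measure"
    and N :: nat
    and A :: "nat \<Rightarrow> real set"
    and w z :: "nat \<Rightarrow> real"
  assumes "\<sigma> > 0" and "\<gamma> > 0" and "\<tau> = \<gamma> * \<sigma>"
    and "prob_space F" and "sets F = sets borel"
    and "\<And>j. j \<le> N \<Longrightarrow> A j \<in> sets borel"
    and "disjoint_family_on A {0..N}"
    and "(\<Union>j\<in>{0..N}. A j) = UNIV"
    and "\<And>j. j \<in> {1..N} \<Longrightarrow> w j \<ge> 0"
    and "(\<Sum>j\<in>{1..N}. w j) = 1"
    and "\<And>j. j \<in> {1..N} \<Longrightarrow> z j \<in> A j"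
  shows "(\<integral>\<^sup>+ p. ennreal \<bar>eiv_density \<alpha> \<beta> \<sigma> \<tau> F p
              - eiv_density \<alpha> \<beta> \<sigma> \<tau> (discrete_mix N w z) p\<bar> \<partial>lborel)
         \<le> 2 * (MAX j\<in>{1..N}. ennreal ((1 + \<bar>\<beta>\<bar> / \<gamma>) / \<sigma>) * diam (A j))
           + ennreal ((\<Sum>j\<in>{1..N}. \<bar>measure F (A j) - w j\<bar>) + measure F (A 0))"
proof -
  interpret F: prob_space F by fact
  define max_cell_bound where "max_cell_bound = (MAX j\<in>{1..N}. ennreal ((1 + \<bar>\<beta>\<bar> / \<gamma>) / \<sigma>) * diam (A j))"
  have Lipschitz_constant: "1 / \<sigma> + \<bar>\<beta>\<bar> / \<tau> = (1 + \<bar>\<beta>\<bar> / \<gamma>) / \<sigma>"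
    using assms(1-3) by (simp add: field_simps)
  have "(\<integral>\<^sup>+ p. ennreal \<bar>eiv_density \<alpha> \<beta> \<sigma> \<tau> F p
                - eiv_density \<alpha> \<beta> \<sigma> \<tau> (discrete_mix N w z) p\<bar> \<partial>lborel)
      \<le> emeasure F (A 0)
        + (\<Sum>j\<in>{1..N}. ennreal (1 / \<sigma> + \<bar>\<beta>\<bar> / \<tau>) * diam (A j) * emeasure F (A j)
                        + ennreal \<bar>measure F (A j) - w j\<bar>)"
    using assms(1-3,5-9,11) by (intro nn_integral_abs_eiv_density_diff_le F.finite_measure_axioms) auto
  also have "\<dots> = emeasure F (A 0) + (\<Sum>j\<in>{1..N}. ennreal ((1 + \<bar>\<beta>\<bar> / \<gamma>) / \<sigma>) * diam (A j) * emeasure F (A j))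
        + (\<Sum>j\<in>{1..N}. ennreal \<bar>measure F (A j) - w j\<bar>)"
    by (simp only: Lipschitz_constant sum.distrib add.assoc)
  also have "\<dots> \<le> emeasure F (A 0) + max_cell_bound + (\<Sum>j\<in>{1..N}. ennreal \<bar>measure F (A j) - w j\<bar>)"
  proof -
    have "N \<noteq> 0"
      using assms(10) by (intro notI) simp
    then show ?thesis
      unfolding max_cell_bound_def using assms(5,6) disjoint_family_on_mono[OF _ assms(7), of "{1..N}"]
      by (intro add_mono order_refl sum_mult_emeasure_le_Max F.prob_space_axioms) auto
  qed
  \<comment> \<open>The argument gives the bound with a single copy of the maximum.\<close>
  also have "\<dots> \<le> 2 * max_cell_bound + ennreal ((\<Sum>j\<in>{1..N}. \<bar>measure F (A j) - w j\<bar>) + measure F (A 0))"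
    by (simp add: F.emeasure_eq_measure ennreal_plus sum_nonneg sum_ennreal mult_2 add_ac add_increasing2)
  finally show ?thesis
    unfolding max_cell_bound_def .
qed

end
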